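(* Let $X$ be a real Hilbert space, $A,B\colon X\rightrightarrows X$ maximally monotone, $T:=\operatorname{Id}-J_A+J_BR_A$, $v:=P_{\overline{\operatorname{ran}}(\operatorname{Id}-T)}(0)$, $D:=\operatorname{dom}A-\operatorname{dom}B$, $R:=\operatorname{ran}A+\operatorname{ran}B$, $v_D:=P_{\overline D}(0)$, $v_R:=P_{\overline R}(0)$, and assume $\overline{\operatorname{ran}}(\operatorname{Id}-T)=\overline{D\cap R}=\overline D\cap\overline R$. Then (i) $v_D=P_{(\operatorname{rec}\overline{\operatorname{dom}}A)^\oplus}v$; (ii) $v_R=P_{-\operatorname{rec}\overline{\operatorname{dom}}A}v$; (iii) $v_D=P_{-\operatorname{rec}\overline{\operatorname{ran}}A}v$; (iv) $v_R=P_{(\operatorname{rec}\overline{\operatorname{ran}}A)^\oplus}v$.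
   Context: $J_C:=(\operatorname{Id}+C)^{-1}$, $R_C:=2J_C-\operatorname{Id}$; $P_S$ is the projection onto a nonempty closed convex set $S$. $\operatorname{rec}C:=\{d:C+d\subseteq C\}$ is the recession cone; $S^\oplus:=\{u:\langle u,s\rangle\ge0\ \forall s\in S\}$ is the dual cone. $\overline{\operatorname{dom}}A,\overline{\operatorname{ran}}A$ are closures of domain and range. *)

theory Defs
  imports "HOL-Analysis.Analysis"
begin

text \<open>Set-valued operators X \<rightrightarrows> X are modelled as functions 'a \<Rightarrow> 'a set.\<close>

definition monotone_op :: "('a::real_inner \<Rightarrow> 'a set) \<Rightarrow> bool" where
  "monotone_op A \<longleftrightarrow> (\<forall>x y u w. u \<in> A x \<longrightarrow> w \<in> A y \<longrightarrow> 0 \<le> inner (x - y) (u - w))"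

definition maximally_monotone :: "('a::real_inner \<Rightarrow> 'a set) \<Rightarrow> bool" where
  "maximally_monotone A \<longleftrightarrow> monotone_op A \<and>
     (\<forall>B. monotone_op B \<and> (\<forall>x. A x \<subseteq> B x) \<longrightarrow> B = A)"

definition dom_op :: "('a \<Rightarrow> 'b set) \<Rightarrow> 'a set" where
  "dom_op A = {x. A x \<noteq> {}}"

definition ran_op :: "('a \<Rightarrow> 'b set) \<Rightarrow> 'b set" where
  "ran_op A = (\<Union>x. A x)"

text \<open>Resolvent J_A = (Id + A)^{-1}: J_A x is the (unique, for monotone A) p with x \<in> p + A p.\<close>
definition resolvent :: "('a::real_inner \<Rightarrow> 'a set) \<Rightarrow> 'a \<Rightarrow> 'a" where
  "resolvent A x = (THE p. x - p \<in> A p)"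

definition reflected_resolvent :: "('a::real_inner \<Rightarrow> 'a set) \<Rightarrow> 'a \<Rightarrow> 'a" where
  "reflected_resolvent A x = 2 *\<^sub>R resolvent A x - x"

text \<open>Metric projection onto S (unique for nonempty closed convex S in a Hilbert space).\<close>
definition proj :: "'a::real_inner set \<Rightarrow> 'a \<Rightarrow> 'a" where
  "proj S a = (THE p. p \<in> S \<and> (\<forall>y\<in>S. dist a p \<le> dist a y))"

definition rec_cone :: "'a::real_vector set \<Rightarrow> 'a set" where
  "rec_cone C = {d. \<forall>c\<in>C. c + d \<in> C}"

definition dual_cone :: "'a::real_inner set \<Rightarrow> 'a set" where
  "dual_cone S = {u. \<forall>s\<in>S. 0 \<le> inner u s}"

end

theory Submission
  imports Defs
begin

text \<open>
  Write K = rec (closure (dom A)).  As vD is the minimal-norm point of closure D, the functional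
  inner (-vD) is bounded above on dom A, i.e. -vD lies in the barrier cone of dom A, and this puts
  vD in the dual cone of K; likewise -vR lies in the barrier cone of ran A.  For a maximally
  monotone operator the barrier cone of the range is contained in the recession cone of the
  closed domain (and vice versa), so -vR lies in K.  Running the same argument for B shows that
  vD and vR are orthogonal and that vD + vR lies in closure D \<inter> closure R, so it is the
  minimal-norm point v of that set.  Moreau's decomposition of v = vD + vR along the dual cone
  of K and -K gives (i) and (ii); with the range of A in place of its domain it gives (iii) and
  (iv).

  The recession-cone inclusion needs the convexity of closure (dom A), which comes from Minty's
  theorem; Minty's theorem in turn follows by minimising Fitzpatrick's function plus half the
  squared norm, which is possible because such functions are strongly convex and the space is
  complete.
\<close>

section \<open>Minimisers and projections in Hilbert space\<close>

lemma nonneg_if_nonneg_plus_small_multiples: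
  fixes a b :: real
  assumes "\<And>t. 0 < t \<Longrightarrow> t \<le> 1 \<Longrightarrow> 0 \<le> a + t * b"
  shows "0 \<le> a"
proof (rule tendsto_lowerbound)
  show "((\<lambda>t. a + t * b) \<longlongrightarrow> a) (at_right 0)"
    by (auto intro!: tendsto_eq_intros)
  show "\<forall>\<^sub>F t in at_right 0. 0 \<le> a + t * b"
    by (rule eventually_mono[OF eventually_at_right_real[OF zero_less_one]]) (simp add: assms)
qed simp

lemma norm_midpoint_sq:
  fixes a b :: "'a::real_inner"
  shows "(norm ((1/2) *\<^sub>R (a + b)))\<^sup>2 = ((norm a)\<^sup>2 + (norm b)\<^sup>2) / 2 - (norm (a - b))\<^sup>2 / 4"
  unfolding power2_norm_eq_inner
  by (simp add: inner_add_left inner_add_right inner_diff_left inner_diff_right inner_commute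
      field_simps)

lemma Cauchy_minimizing_sequence:
  fixes f :: "'a::real_normed_vector \<Rightarrow> real"
  assumes "c > 0"
    and gap: "\<And>a b. a \<in> S \<Longrightarrow> b \<in> S \<Longrightarrow> c * (norm (a - b))\<^sup>2 \<le> (f a + f b) / 2 - m"
    and z: "\<And>n. z n \<in> S" "(\<lambda>n. f (z n)) \<longlonglongrightarrow> m"
  shows "Cauchy z"
proof (rule metric_CauchyI)
  fix e :: real assume "e > 0"
  then have "m < m + c * e\<^sup>2" using \<open>c > 0\<close> by simp
  with z(2) have "\<forall>\<^sub>F n in sequentially. f (z n) < m + c * e\<^sup>2" by (rule order_tendstoD(2))
  then obtain N where N: "\<And>n. n \<ge> N \<Longrightarrow> f (z n) < m + c * e\<^sup>2"
    unfolding eventually_sequentially by blast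
  have "dist (z i) (z j) < e" if "i \<ge> N" "j \<ge> N" for i j
  proof -
    have "c * (norm (z i - z j))\<^sup>2 < c * e\<^sup>2"
      using gap[OF z(1) z(1), of i j] N[OF \<open>i \<ge> N\<close>] N[OF \<open>j \<ge> N\<close>] by argo
    then have "(norm (z i - z j))\<^sup>2 < e\<^sup>2" using \<open>c > 0\<close> by simp
    then have "norm (z i - z j) < e" by (rule power_less_imp_less_base) (use \<open>e > 0\<close> in simp)
    then show ?thesis by (simp add: dist_norm)
  qed
  then show "\<exists>N. \<forall>i\<ge>N. \<forall>j\<ge>N. dist (z i) (z j) < e" by blast
qed

lemma convex_on_plus_half_norm_sq_midpoint:
  fixes g :: "'a::real_inner \<Rightarrow> real"
  assumes "convex_on S g" "a \<in> S" "b \<in> S"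
  shows "(1/2) *\<^sub>R (a + b) \<in> S"
    and "g ((1/2) *\<^sub>R (a + b)) + (norm ((1/2) *\<^sub>R (a + b)))\<^sup>2 / 2
      \<le> (g a + (norm a)\<^sup>2 / 2 + (g b + (norm b)\<^sup>2 / 2)) / 2 - (norm (a - b))\<^sup>2 / 8"
proof -
  have "(1 - 1/2) *\<^sub>R a + (1/2) *\<^sub>R b \<in> S"
    using convexD[OF convex_on_imp_convex[OF assms(1)]] assms(2,3) by simp
  then show "(1/2) *\<^sub>R (a + b) \<in> S" by (simp add: scaleR_add_right)
  have "g ((1 - 1/2) *\<^sub>R a + (1/2) *\<^sub>R b) \<le> (1 - 1/2) * g a + (1/2) * g b"
    by (rule convex_onD[OF assms(1)]) (use assms in auto)
  then have "g ((1/2) *\<^sub>R (a + b)) \<le> (g a + g b) / 2" by (simp add: scaleR_add_right)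
  then show "g ((1/2) *\<^sub>R (a + b)) + (norm ((1/2) *\<^sub>R (a + b)))\<^sup>2 / 2
      \<le> (g a + (norm a)\<^sup>2 / 2 + (g b + (norm b)\<^sup>2 / 2)) / 2 - (norm (a - b))\<^sup>2 / 8"
    unfolding norm_midpoint_sq by argo
qed

lemma convex_on_plus_half_norm_sq_attains_min:
  fixes g :: "'a::{real_inner,complete_space} \<Rightarrow> real"
  assumes "convex_on S g" and "S \<noteq> {}"
    and bdd: "bdd_below ((\<lambda>z. g z + (norm z)\<^sup>2 / 2) ` S)"
    and lsc: "\<And>z p m. (\<And>n. z n \<in> S) \<Longrightarrow> z \<longlonglongrightarrow> p \<Longrightarrow> (\<lambda>n. g (z n)) \<longlonglongrightarrow> m \<Longrightarrow>
      p \<in> S \<and> g p \<le> m"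
  shows "\<exists>p\<in>S. \<forall>q\<in>S. g p + (norm p)\<^sup>2 / 2 \<le> g q + (norm q)\<^sup>2 / 2"
proof -
  define f where "f z = g z + (norm z)\<^sup>2 / 2" for z
  define m where "m = Inf (f ` S)"
  have m_le: "m \<le> f q" if "q \<in> S" for q
    unfolding m_def using bdd that by (simp add: f_def cInf_lower)
  have gap: "(norm (a - b))\<^sup>2 / 8 \<le> (f a + f b) / 2 - m" if "a \<in> S" "b \<in> S" for a b
  proof -
    note midpoint = convex_on_plus_half_norm_sq_midpoint[OF assms(1) that]
    from m_le[OF midpoint(1)] midpoint(2) show ?thesis unfolding f_def by argo
  qed
  have "m \<in> closure (f ` S)"
    unfolding m_def using bdd \<open>S \<noteq> {}\<close> by (intro closure_contains_Inf) (auto simp: f_def)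
  then obtain y where y: "\<And>n. y n \<in> f ` S" "y \<longlonglongrightarrow> m"
    unfolding closure_sequential by blast
  have "\<forall>n. \<exists>x. x \<in> S \<and> f x = y n" using y(1) by (metis imageE)
  then obtain z where "\<And>n. z n \<in> S" "\<And>n. f (z n) = y n" by metis
  with y(2) have z: "\<And>n. z n \<in> S" "(\<lambda>n. f (z n)) \<longlonglongrightarrow> m" by simp_all
  have "Cauchy z"
    by (rule Cauchy_minimizing_sequence[of "1/8" S f m]) (use gap z in auto)
  then obtain p where "z \<longlonglongrightarrow> p" using Cauchy_convergent_iff convergent_def by blast
  moreover have "(\<lambda>n. g (z n)) \<longlonglongrightarrow> m - (norm p)\<^sup>2 / 2"
  proof -
    have "(\<lambda>n. f (z n) - (norm (z n))\<^sup>2 / 2) \<longlonglongrightarrow> m - (norm p)\<^sup>2 / 2"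
      by (intro tendsto_intros z \<open>z \<longlonglongrightarrow> p\<close>) simp
    then show ?thesis by (simp add: f_def)
  qed
  ultimately have "p \<in> S \<and> g p \<le> m - (norm p)\<^sup>2 / 2" by (rule lsc[OF z(1)])
  then have "p \<in> S" "f p \<le> m" by (auto simp: f_def)
  then show ?thesis using m_le by (force simp: f_def)
qed

lemma convex_on_plus_half_norm_sq_min_variational:
  fixes g :: "'a::real_inner \<Rightarrow> real"
  assumes "convex_on S g" and "p \<in> S" "q \<in> S"
    and min: "\<And>z. z \<in> S \<Longrightarrow> g p + (norm p)\<^sup>2 / 2 \<le> g z + (norm z)\<^sup>2 / 2"
  shows "0 \<le> g q - g p + inner p (q - p)"
proof (rule nonneg_if_nonneg_plus_small_multiples)
  fix t :: real assume t: "0 < t" "t \<le> 1"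
  have comb: "(1 - t) *\<^sub>R p + t *\<^sub>R q = p + t *\<^sub>R (q - p)" by (simp add: algebra_simps)
  have "p + t *\<^sub>R (q - p) \<in> S" "g (p + t *\<^sub>R (q - p)) \<le> (1 - t) * g p + t * g q"
    using convexD[OF convex_on_imp_convex[OF assms(1)] assms(2,3), of "1 - t" t]
      convex_onD[OF assms(1), of t p q] t assms(2,3) by (simp_all add: comb)
  moreover have "(norm (p + t *\<^sub>R (q - p)))\<^sup>2 = (norm p)\<^sup>2 + 2 * t * inner p (q - p) + t\<^sup>2 * (norm (q - p))\<^sup>2"
    unfolding power2_norm_eq_inner
    by (simp add: inner_add_left inner_add_right inner_commute algebra_simps power2_eq_square)
  ultimately have "0 \<le> t * ((g q - g p + inner p (q - p)) + t * ((norm (q - p))\<^sup>2 / 2))"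
    using min[of "p + t *\<^sub>R (q - p)"] by (simp add: algebra_simps power2_eq_square)
  then show "0 \<le> g q - g p + inner p (q - p) + t * ((norm (q - p))\<^sup>2 / 2)"
    using t by (simp add: zero_le_mult_iff)
qed

lemma proj_eqI:
  fixes S :: "'a::real_inner set"
  assumes "p \<in> S" and variational: "\<And>y. y \<in> S \<Longrightarrow> inner (a - p) (y - p) \<le> 0"
  shows "proj S a = p"
  unfolding proj_def
proof (rule the_equality)
  have pythagoras: "(norm (a - p))\<^sup>2 + (norm (y - p))\<^sup>2 \<le> (norm (a - y))\<^sup>2" if "y \<in> S" for y
  proof -
    have "(norm (a - y))\<^sup>2 = (norm (a - p))\<^sup>2 + (norm (y - p))\<^sup>2 - 2 * inner (a - p) (y - p)"
      by (simp add: power2_norm_eq_inner inner_diff_left inner_diff_right inner_commute algebra_simps)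
    then show ?thesis using variational[OF that] by linarith
  qed
  show "p \<in> S \<and> (\<forall>y\<in>S. dist a p \<le> dist a y)"
  proof (intro conjI ballI \<open>p \<in> S\<close>)
    fix y assume "y \<in> S"
    with pythagoras have "(norm (a - p))\<^sup>2 \<le> (norm (a - y))\<^sup>2"
      by (smt (verit) zero_le_power2)
    then show "dist a p \<le> dist a y" by (simp add: dist_norm power2_le_iff_abs_le)
  qed
  fix q assume q: "q \<in> S \<and> (\<forall>y\<in>S. dist a q \<le> dist a y)"
  then have "(norm (a - q))\<^sup>2 \<le> (norm (a - p))\<^sup>2"
    using \<open>p \<in> S\<close> by (intro power_mono) (auto simp: dist_norm)
  with pythagoras[of q] q have "(norm (q - p))\<^sup>2 \<le> 0" by linarith
  then show "q = p" by simp
qed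

lemma proj_variational:
  fixes S :: "'a::{real_inner,complete_space} set"
  assumes "closed S" "convex S" "S \<noteq> {}"
  shows "proj S a \<in> S" "\<And>y. y \<in> S \<Longrightarrow> inner (a - proj S a) (y - proj S a) \<le> 0"
proof -
  define g where "g z = - inner a z" for z
  have "convex_on S g"
    using \<open>convex S\<close> by (intro convex_onI) (auto simp: g_def inner_add_right algebra_simps)
  moreover have "bdd_below ((\<lambda>z. g z + (norm z)\<^sup>2 / 2) ` S)"
  proof (rule bdd_belowI2)
    fix z
    have "0 \<le> (norm (z - a))\<^sup>2" by simp
    then show "- (norm a)\<^sup>2 / 2 \<le> g z + (norm z)\<^sup>2 / 2"
      by (simp add: g_def power2_norm_eq_inner inner_diff_left inner_diff_right inner_commute)
  qed
  moreover have "p \<in> S \<and> g p \<le> m"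
    if "\<And>n. z n \<in> S" "z \<longlonglongrightarrow> p" "(\<lambda>n. g (z n)) \<longlonglongrightarrow> m" for z p m
  proof -
    have "(\<lambda>n. g (z n)) \<longlonglongrightarrow> g p" unfolding g_def by (intro tendsto_intros that)
    with that show ?thesis using \<open>closed S\<close> closed_sequentially LIMSEQ_unique by blast
  qed
  ultimately have "\<exists>p\<in>S. \<forall>q\<in>S. g p + (norm p)\<^sup>2 / 2 \<le> g q + (norm q)\<^sup>2 / 2"
    by (rule convex_on_plus_half_norm_sq_attains_min[OF _ \<open>S \<noteq> {}\<close>])
  then obtain p where p: "p \<in> S" "\<And>q. q \<in> S \<Longrightarrow> g p + (norm p)\<^sup>2 / 2 \<le> g q + (norm q)\<^sup>2 / 2"
    by blast
  have variational: "inner (a - p) (y - p) \<le> 0" if "y \<in> S" for y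
    using convex_on_plus_half_norm_sq_min_variational[OF \<open>convex_on S g\<close> p(1) that p(2)]
    by (simp add: g_def inner_diff_left inner_diff_right inner_commute)
  show "proj S a \<in> S" using proj_eqI[OF p(1) variational] p(1) by simp
  show "inner (a - proj S a) (y - proj S a) \<le> 0" if "y \<in> S" for y
    using proj_eqI[OF p(1) variational] variational[OF that] by simp
qed

lemma proj_zero_le:
  fixes C :: "'a::{real_inner,complete_space} set"
  assumes "closed C" "convex C" "C \<noteq> {}" "y \<in> C"
  shows "inner (proj C 0) (proj C 0) \<le> inner (proj C 0) y"
  using proj_variational(2)[OF assms, where a = 0] by (simp add: inner_diff_right)

lemma proj_inter_zero_eq_add:
  fixes C1 C2 :: "'a::real_inner set"
  assumes "p \<in> C1" "q \<in> rec_cone C1" "q \<in> C2" "p \<in> rec_cone C2" "inner p q = 0"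
    and "\<And>y. y \<in> C1 \<Longrightarrow> inner p p \<le> inner p y" "\<And>y. y \<in> C2 \<Longrightarrow> inner q q \<le> inner q y"
  shows "proj (C1 \<inter> C2) 0 = p + q"
proof (rule proj_eqI)
  have "p + q \<in> C1" "q + p \<in> C2" using assms(1-4) unfolding rec_cone_def by blast+
  then show "p + q \<in> C1 \<inter> C2" by (simp add: add.commute)
  fix y assume "y \<in> C1 \<inter> C2"
  then have "inner p p \<le> inner p y" "inner q q \<le> inner q y" using assms(6,7) by auto
  moreover have "inner (0 - (p + q)) (y - (p + q))
      = inner p p + inner q q + 2 * inner p q - inner p y - inner q y"
    by (simp add: inner_add_left inner_add_right inner_diff_left inner_diff_right inner_commute
        algebra_simps)
  ultimately show "inner (0 - (p + q)) (y - (p + q)) \<le> 0" using assms(5) by linarith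
qed

lemma proj_moreau_decomposition:
  fixes K :: "'a::real_inner set"
  assumes "p \<in> dual_cone K" "- q \<in> K" "inner p q = 0"
  shows "proj (dual_cone K) (p + q) = p" "proj (uminus ` K) (p + q) = q"
proof -
  show "proj (dual_cone K) (p + q) = p"
  proof (rule proj_eqI[OF assms(1)])
    fix y assume "y \<in> dual_cone K"
    then have "0 \<le> inner y (- q)" using assms(2) by (auto simp: dual_cone_def)
    then show "inner (p + q - p) (y - p) \<le> 0" using assms(3) by (simp add: inner_diff_right inner_commute)
  qed
  show "proj (uminus ` K) (p + q) = q"
  proof (rule proj_eqI)
    show "q \<in> uminus ` K" using assms(2) by (metis image_eqI minus_minus)
    fix y assume "y \<in> uminus ` K"
    then obtain k where "k \<in> K" "y = - k" by blast
    then have "0 \<le> inner p k" using assms(1) by (auto simp: dual_cone_def)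
    then show "inner (p + q - q) (y - q) \<le> 0" using assms(3) \<open>y = - k\<close> by (simp add: inner_diff_right)
  qed
qed

section \<open>Maximally monotone operators\<close>

lemma maximally_monotone_iff:
  "maximally_monotone A \<longleftrightarrow> monotone_op A \<and>
     (\<forall>x u. (\<forall>y w. w \<in> A y \<longrightarrow> 0 \<le> inner (x - y) (u - w)) \<longrightarrow> u \<in> A x)"
proof
  assume max: "maximally_monotone A"
  then have mono: "monotone_op A" by (simp add: maximally_monotone_def)
  have "u \<in> A x" if rel: "\<And>y w. w \<in> A y \<Longrightarrow> 0 \<le> inner (x - y) (u - w)" for x u
  proof -
    define B where "B = A(x := insert u (A x))"
    have "inner (y - x) (w - u) = inner (x - y) (u - w)" for y w
      by (metis inner_minus_left inner_minus_right minus_diff_eq)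
    then have "monotone_op B"
      using mono rel unfolding monotone_op_def B_def by (auto split: if_splits)
    moreover have "\<forall>z. A z \<subseteq> B z" unfolding B_def by auto
    ultimately have "B = A" using max by (simp add: maximally_monotone_def)
    then show "u \<in> A x" unfolding B_def by (metis fun_upd_same insertI1)
  qed
  with mono show "monotone_op A \<and>
     (\<forall>x u. (\<forall>y w. w \<in> A y \<longrightarrow> 0 \<le> inner (x - y) (u - w)) \<longrightarrow> u \<in> A x)" by blast
next
  assume "monotone_op A \<and> (\<forall>x u. (\<forall>y w. w \<in> A y \<longrightarrow> 0 \<le> inner (x - y) (u - w)) \<longrightarrow> u \<in> A x)"
  then show "maximally_monotone A"
    unfolding maximally_monotone_def monotone_op_def by (blast intro!: ext)
qed

lemma maximally_monotoneD:
  "maximally_monotone A \<Longrightarrow> u \<in> A x \<Longrightarrow> w \<in> A y \<Longrightarrow> 0 \<le> inner (x - y) (u - w)"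
  unfolding maximally_monotone_def monotone_op_def by blast

lemma maximally_monotone_memI:
  "maximally_monotone A \<Longrightarrow> (\<And>y w. w \<in> A y \<Longrightarrow> 0 \<le> inner (x - y) (u - w)) \<Longrightarrow> u \<in> A x"
  unfolding maximally_monotone_iff by blast

lemma dom_op_nonempty: "maximally_monotone A \<Longrightarrow> dom_op A \<noteq> {}"
  using maximally_monotone_memI[of A 0 0] by (force simp: dom_op_def)

definition inverse_op :: "('a \<Rightarrow> 'b set) \<Rightarrow> 'b \<Rightarrow> 'a set" where
  "inverse_op A u = {x. u \<in> A x}"

lemma dom_op_inverse_op [simp]: "dom_op (inverse_op A) = ran_op A"
  and ran_op_inverse_op [simp]: "ran_op (inverse_op A) = dom_op A"
  by (auto simp: dom_op_def ran_op_def inverse_op_def)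

lemma maximally_monotone_inverse_op:
  assumes "maximally_monotone A"
  shows "maximally_monotone (inverse_op A)"
  unfolding maximally_monotone_iff monotone_op_def inverse_op_def
  using maximally_monotoneD[OF assms] maximally_monotone_memI[OF assms]
  by (simp add: inner_commute)

lemma ran_op_nonempty: "maximally_monotone A \<Longrightarrow> ran_op A \<noteq> {}"
  using dom_op_nonempty[OF maximally_monotone_inverse_op] by simp

lemma maximally_monotone_shift_scale:
  assumes max: "maximally_monotone A" and "l > 0"
  shows "maximally_monotone (\<lambda>x. (\<lambda>u. l *\<^sub>R u) ` A (x + z))"
  unfolding maximally_monotone_iff monotone_op_def
proof (intro conjI allI impI)
  fix x y u w
  assume "u \<in> (\<lambda>u. l *\<^sub>R u) ` A (x + z)" "w \<in> (\<lambda>u. l *\<^sub>R u) ` A (y + z)"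
  then obtain u' w' where "u' \<in> A (x + z)" "w' \<in> A (y + z)" "u = l *\<^sub>R u'" "w = l *\<^sub>R w'" by blast
  with maximally_monotoneD[OF max] \<open>l > 0\<close> show "0 \<le> inner (x - y) (u - w)"
    by (fastforce simp: scaleR_diff_right[symmetric])
next
  fix x u
  assume rel: "\<forall>y w. w \<in> (\<lambda>u. l *\<^sub>R u) ` A (y + z) \<longrightarrow> 0 \<le> inner (x - y) (u - w)"
  have "(1 / l) *\<^sub>R u \<in> A (x + z)"
  proof (rule maximally_monotone_memI[OF max])
    fix y w assume "w \<in> A y"
    then have "l *\<^sub>R w \<in> (\<lambda>u. l *\<^sub>R u) ` A ((y - z) + z)" by (auto intro: imageI)
    with rel have "0 \<le> inner (x - (y - z)) (u - l *\<^sub>R w)" by blast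
    moreover have "inner (x + z - y) ((1 / l) *\<^sub>R u - w) = inner (x - (y - z)) (u - l *\<^sub>R w) / l"
      using \<open>l > 0\<close> by (simp add: inner_diff_right inner_diff_left inner_add_left field_simps)
    ultimately show "0 \<le> inner (x + z - y) ((1 / l) *\<^sub>R u - w)" using \<open>l > 0\<close> by simp
  qed
  then show "u \<in> (\<lambda>u. l *\<^sub>R u) ` A (x + z)"
    using \<open>l > 0\<close> by (auto intro: image_eqI[of _ _ "(1 / l) *\<^sub>R u"])
qed

section \<open>Minty's theorem\<close>

text \<open>Outside fitzpatrick_dom A the supremum defining fitzpatrick A is unbounded and the real SUP
  is a junk value, so every statement about fitzpatrick A is restricted to fitzpatrick_dom A.\<close>

definition fitzpatrick_dom :: "('a::real_inner \<Rightarrow> 'a set) \<Rightarrow> ('a \<times> 'a) set" where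
  "fitzpatrick_dom A =
     {p. bdd_above ((\<lambda>(y, w). inner (fst p) w + inner y (snd p) - inner y w) ` {(y, w). w \<in> A y})}"

definition fitzpatrick :: "('a::real_inner \<Rightarrow> 'a set) \<Rightarrow> 'a \<times> 'a \<Rightarrow> real" where
  "fitzpatrick A p = (SUP (y, w)\<in>{(y, w). w \<in> A y}. inner (fst p) w + inner y (snd p) - inner y w)"

lemma fitzpatrick_upper:
  "p \<in> fitzpatrick_dom A \<Longrightarrow> w \<in> A y \<Longrightarrow>
    inner (fst p) w + inner y (snd p) - inner y w \<le> fitzpatrick A p"
  unfolding fitzpatrick_dom_def fitzpatrick_def by (auto intro!: cSUP_upper2[where x = "(y, w)"])

lemma fitzpatrick_least:
  assumes "dom_op A \<noteq> {}"
    and "\<And>y w. w \<in> A y \<Longrightarrow> inner (fst p) w + inner y (snd p) - inner y w \<le> M"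
  shows "p \<in> fitzpatrick_dom A" "fitzpatrick A p \<le> M"
  using assms unfolding fitzpatrick_dom_def fitzpatrick_def dom_op_def
  by (auto intro!: bdd_aboveI2 cSUP_least)

lemma fitzpatrick_coupling_eq:
  fixes x u y w :: "'a::real_inner"
  shows "inner x w + inner y u - inner y w = inner x u - inner (x - y) (u - w)"
  by (simp add: inner_diff_left inner_diff_right inner_commute)

lemma inner_le_fitzpatrick:
  assumes max: "maximally_monotone A" and "p \<in> fitzpatrick_dom A"
  shows "inner (fst p) (snd p) \<le> fitzpatrick A p"
proof (rule ccontr)
  obtain x u where p: "p = (x, u)" by fastforce
  assume "\<not> inner (fst p) (snd p) \<le> fitzpatrick A p"
  then have less: "fitzpatrick A p < inner x u" using p by simp
  have upper: "inner x u - inner (x - y) (u - w) \<le> fitzpatrick A p" if "w \<in> A y" for y w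
    using fitzpatrick_upper[OF \<open>p \<in> fitzpatrick_dom A\<close> that] by (simp add: p fitzpatrick_coupling_eq)
  have "u \<in> A x"
    using upper less by (intro maximally_monotone_memI[OF max]) force
  from upper[OF this] less show False by simp
qed

lemma fitzpatrick_on_graph:
  assumes max: "maximally_monotone A" and "u \<in> A x"
  shows "(x, u) \<in> fitzpatrick_dom A" "fitzpatrick A (x, u) \<le> inner x u"
  using fitzpatrick_least[OF dom_op_nonempty[OF max], of "(x, u)" "inner x u"]
    maximally_monotoneD[OF max \<open>u \<in> A x\<close>]
  by (simp_all add: fitzpatrick_coupling_eq)

lemma convex_on_fitzpatrick:
  assumes "dom_op A \<noteq> {}"
  shows "convex_on (fitzpatrick_dom A) (fitzpatrick A)"
proof -
  have comb: "(1 - t) *\<^sub>R a + t *\<^sub>R b \<in> fitzpatrick_dom A \<and>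
      fitzpatrick A ((1 - t) *\<^sub>R a + t *\<^sub>R b) \<le> (1 - t) * fitzpatrick A a + t * fitzpatrick A b"
    if "a \<in> fitzpatrick_dom A" "b \<in> fitzpatrick_dom A" "0 \<le> t" "t \<le> 1" for a b t
  proof -
    have "inner (fst ((1 - t) *\<^sub>R a + t *\<^sub>R b)) w + inner y (snd ((1 - t) *\<^sub>R a + t *\<^sub>R b)) - inner y w
        \<le> (1 - t) * fitzpatrick A a + t * fitzpatrick A b" if "w \<in> A y" for y w
    proof -
      have "inner (fst ((1 - t) *\<^sub>R a + t *\<^sub>R b)) w + inner y (snd ((1 - t) *\<^sub>R a + t *\<^sub>R b)) - inner y w
          = (1 - t) * (inner (fst a) w + inner y (snd a) - inner y w)
            + t * (inner (fst b) w + inner y (snd b) - inner y w)"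
        by (simp add: inner_add_left inner_add_right algebra_simps)
      also have "\<dots> \<le> (1 - t) * fitzpatrick A a + t * fitzpatrick A b"
        using fitzpatrick_upper[OF \<open>a \<in> _\<close> \<open>w \<in> A y\<close>] fitzpatrick_upper[OF \<open>b \<in> _\<close> \<open>w \<in> A y\<close>]
          \<open>0 \<le> t\<close> \<open>t \<le> 1\<close>
        by (intro add_mono mult_left_mono) auto
      finally show ?thesis .
    qed
    then show ?thesis using fitzpatrick_least[OF assms] by blast
  qed
  have "convex (fitzpatrick_dom A)"
  proof (rule convexI)
    fix a b and s t :: real
    assume "a \<in> fitzpatrick_dom A" "b \<in> fitzpatrick_dom A" "0 \<le> s" "0 \<le> t" "s + t = 1"
    moreover from \<open>s + t = 1\<close> have "s = 1 - t" by simp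
    ultimately show "s *\<^sub>R a + t *\<^sub>R b \<in> fitzpatrick_dom A" using comb[of a b t] by simp
  qed
  then show ?thesis
    using comb by (intro convex_onI) simp_all
qed

lemma fitzpatrick_lsc:
  assumes "dom_op A \<noteq> {}" and z: "\<And>n. z n \<in> fitzpatrick_dom A" "z \<longlonglongrightarrow> p"
    and lim: "(\<lambda>n. fitzpatrick A (z n)) \<longlonglongrightarrow> m"
  shows "p \<in> fitzpatrick_dom A \<and> fitzpatrick A p \<le> m"
proof -
  have "inner (fst p) w + inner y (snd p) - inner y w \<le> m" if "w \<in> A y" for y w
  proof (rule LIMSEQ_le[OF _ lim])
    show "(\<lambda>n. inner (fst (z n)) w + inner y (snd (z n)) - inner y w)
        \<longlonglongrightarrow> inner (fst p) w + inner y (snd p) - inner y w"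
      by (intro tendsto_intros z)
    show "\<exists>N. \<forall>n\<ge>N. inner (fst (z n)) w + inner y (snd (z n)) - inner y w \<le> fitzpatrick A (z n)"
      using fitzpatrick_upper[OF z(1) that] by blast
  qed
  then show ?thesis using fitzpatrick_least[OF assms(1)] by blast
qed

lemma fitzpatrick_plus_half_norm_sq_nonneg:
  assumes max: "maximally_monotone A" and "p \<in> fitzpatrick_dom A"
  shows "0 \<le> fitzpatrick A p + (norm p)\<^sup>2 / 2"
proof -
  obtain x u where p: "p = (x, u)" by fastforce
  then have "inner x u \<le> fitzpatrick A p" using inner_le_fitzpatrick[OF assms] by simp
  moreover have "(norm p)\<^sup>2 = (norm x)\<^sup>2 + (norm u)\<^sup>2" by (simp add: p norm_Pair)
  moreover have "0 \<le> (norm (x + u))\<^sup>2" by simp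
  moreover have "(norm (x + u))\<^sup>2 = (norm x)\<^sup>2 + 2 * inner x u + (norm u)\<^sup>2"
    unfolding power2_norm_eq_inner by (simp add: inner_add_left inner_add_right inner_commute)
  ultimately show ?thesis by argo
qed

theorem minty_zero:
  fixes A :: "'a::{real_inner,complete_space} \<Rightarrow> 'a set"
  assumes max: "maximally_monotone A"
  shows "\<exists>x. - x \<in> A x"
proof -
  note dom_ne = dom_op_nonempty[OF max]
  then obtain x1 u1 where "u1 \<in> A x1" by (auto simp: dom_op_def)
  then have "fitzpatrick_dom A \<noteq> {}" using fitzpatrick_on_graph[OF max] by blast
  moreover have "bdd_below ((\<lambda>p. fitzpatrick A p + (norm p)\<^sup>2 / 2) ` fitzpatrick_dom A)"
    using fitzpatrick_plus_half_norm_sq_nonneg[OF max] by (intro bdd_belowI2)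
  ultimately have "\<exists>p\<in>fitzpatrick_dom A. \<forall>q\<in>fitzpatrick_dom A.
      fitzpatrick A p + (norm p)\<^sup>2 / 2 \<le> fitzpatrick A q + (norm q)\<^sup>2 / 2"
    by (rule convex_on_plus_half_norm_sq_attains_min[OF convex_on_fitzpatrick[OF dom_ne] _ _
          fitzpatrick_lsc[OF dom_ne]])
  then obtain p where p: "p \<in> fitzpatrick_dom A"
    and min: "\<And>q. q \<in> fitzpatrick_dom A \<Longrightarrow>
      fitzpatrick A p + (norm p)\<^sup>2 / 2 \<le> fitzpatrick A q + (norm q)\<^sup>2 / 2"
    by blast
  obtain x0 u0 where p_eq: "p = (x0, u0)" by fastforce
  txt \<open>The first-order condition at the minimiser makes (-u0, -x0) monotonically related to the
    graph, hence a point of it; testing the condition with that point forces x0 + u0 = 0.\<close>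
  have key: "(norm (x0 + u0))\<^sup>2 \<le> inner (y + u0) (w + x0)" if "w \<in> A y" for y w
  proof -
    note graph = fitzpatrick_on_graph[OF max that]
    have "0 \<le> fitzpatrick A (y, w) - fitzpatrick A p + inner p ((y, w) - p)"
      by (rule convex_on_plus_half_norm_sq_min_variational[OF convex_on_fitzpatrick[OF dom_ne]
            p graph(1) min])
    moreover have "inner x0 u0 \<le> fitzpatrick A p"
      using inner_le_fitzpatrick[OF max p] by (simp add: p_eq)
    moreover have "inner y w - inner x0 u0 + inner p ((y, w) - p)
        = inner (y + u0) (w + x0) - (norm (x0 + u0))\<^sup>2"
      by (simp add: p_eq power2_norm_eq_inner inner_add_left inner_add_right inner_diff_left
          inner_diff_right inner_commute)
    ultimately show ?thesis using graph(2) by linarith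
  qed
  have "- x0 \<in> A (- u0)"
  proof (rule maximally_monotone_memI[OF max])
    fix y w assume "w \<in> A y"
    have "inner (- u0 - y) (- x0 - w) = inner (y + u0) (w + x0)"
      by (simp add: inner_add_left inner_add_right inner_diff_left inner_diff_right inner_commute
          algebra_simps)
    with key[OF \<open>w \<in> A y\<close>] show "0 \<le> inner (- u0 - y) (- x0 - w)"
      by (smt (verit) zero_le_power2)
  qed
  moreover from key[OF this] have "x0 + u0 = 0" by simp
  then have "x0 = - u0" by (simp add: add_eq_0_iff2)
  ultimately have "- x0 \<in> A x0" by simp
  then show ?thesis by blast
qed

corollary minty:
  fixes A :: "'a::{real_inner,complete_space} \<Rightarrow> 'a set"
  assumes "maximally_monotone A" and "l > 0"
  shows "\<exists>x. (1 / l) *\<^sub>R (z - x) \<in> A x"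
proof -
  obtain y where "- y \<in> (\<lambda>u. l *\<^sub>R u) ` A (y + z)"
    using minty_zero[OF maximally_monotone_shift_scale[OF assms]] by blast
  then obtain w where "w \<in> A (y + z)" "- y = l *\<^sub>R w" by blast
  then have "(1 / l) *\<^sub>R (z - (y + z)) \<in> A (y + z)" using \<open>l > 0\<close> by simp
  then show ?thesis by blast
qed

section \<open>Domains, ranges and their cones\<close>

text \<open>The point x below is the resolvent J_{lA} z; as l tends to 0 it converges to z whenever z is
  a convex combination of two points of dom A.\<close>

lemma norm_sq_resolvent_point_le:
  fixes A :: "'a::real_inner \<Rightarrow> 'a set"
  assumes mono: "monotone_op A" and "\<alpha> \<in> A a" "\<beta> \<in> A b" "0 \<le> t" "t \<le> 1" "l > 0"
    and z: "z = (1 - t) *\<^sub>R a + t *\<^sub>R b"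
    and x: "(1 / l) *\<^sub>R (z - x) \<in> A x"
  shows "(norm (x - z))\<^sup>2
    \<le> 2 * l * ((1 - t) * inner (a - z) \<alpha> + t * inner (b - z) \<beta>) + l\<^sup>2 * (norm ((1 - t) *\<^sub>R \<alpha> + t *\<^sub>R \<beta>))\<^sup>2"
proof -
  define d where "d = x - z"
  define \<gamma> where "\<gamma> = (1 - t) *\<^sub>R \<alpha> + t *\<^sub>R \<beta>"
  define K where "K = (1 - t) * inner (a - z) \<alpha> + t * inner (b - z) \<beta>"
  have monotone_at_x: "l * inner (x - c) \<delta> \<le> inner (x - c) (z - x)" if "\<delta> \<in> A c" for c \<delta>
  proof -
    have "0 \<le> inner (x - c) ((1 / l) *\<^sub>R (z - x) - \<delta>)"
      using mono x that unfolding monotone_op_def by blast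
    then have "0 \<le> l * inner (x - c) ((1 / l) *\<^sub>R (z - x) - \<delta>)" using \<open>l > 0\<close> by simp
    then show ?thesis using \<open>l > 0\<close> by (simp add: inner_diff_right algebra_simps)
  qed
  have "l * ((1 - t) * inner (x - a) \<alpha> + t * inner (x - b) \<beta>)
      = (1 - t) * (l * inner (x - a) \<alpha>) + t * (l * inner (x - b) \<beta>)"
    by (simp add: algebra_simps)
  also have "\<dots> \<le> (1 - t) * inner (x - a) (z - x) + t * inner (x - b) (z - x)"
    using monotone_at_x[OF \<open>\<alpha> \<in> A a\<close>] monotone_at_x[OF \<open>\<beta> \<in> A b\<close>] \<open>0 \<le> t\<close> \<open>t \<le> 1\<close>
    by (intro add_mono mult_left_mono) auto
  also have "\<dots> = inner ((1 - t) *\<^sub>R (x - a) + t *\<^sub>R (x - b)) (z - x)"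
    by (simp add: inner_add_left)
  also have "(1 - t) *\<^sub>R (x - a) + t *\<^sub>R (x - b) = d"
    by (simp add: z d_def algebra_simps)
  also have "inner d (z - x) = - (norm d)\<^sup>2"
    by (simp add: d_def power2_norm_eq_inner inner_diff_right inner_diff_left inner_commute)
  finally have "(norm d)\<^sup>2 \<le> l * (K - inner d \<gamma>)"
    by (simp add: K_def \<gamma>_def d_def inner_diff_left inner_add_right algebra_simps)
  moreover have "- (2 * (l * inner d \<gamma>)) \<le> (norm d)\<^sup>2 + l\<^sup>2 * (norm \<gamma>)\<^sup>2"
  proof -
    have "0 \<le> (norm (d + l *\<^sub>R \<gamma>))\<^sup>2" by simp
    then show ?thesis
      unfolding power2_norm_eq_inner
      by (simp add: inner_add_left inner_add_right inner_commute power2_eq_square algebra_simps)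
  qed
  ultimately have "(norm d)\<^sup>2 \<le> 2 * l * K + l\<^sup>2 * (norm \<gamma>)\<^sup>2"
    by (simp add: right_diff_distrib)
  then show ?thesis unfolding K_def \<gamma>_def d_def .
qed

lemma convex_combination_in_closure_dom_op:
  fixes A :: "'a::{real_inner,complete_space} \<Rightarrow> 'a set"
  assumes max: "maximally_monotone A" and "a \<in> dom_op A" "b \<in> dom_op A" "0 \<le> t" "t \<le> 1"
  shows "(1 - t) *\<^sub>R a + t *\<^sub>R b \<in> closure (dom_op A)"
proof -
  obtain \<alpha> \<beta> where "\<alpha> \<in> A a" "\<beta> \<in> A b" using assms(2,3) by (auto simp: dom_op_def)
  define z where "z = (1 - t) *\<^sub>R a + t *\<^sub>R b"
  define C where "C = 2 * \<bar>(1 - t) * inner (a - z) \<alpha> + t * inner (b - z) \<beta>\<bar>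
    + (norm ((1 - t) *\<^sub>R \<alpha> + t *\<^sub>R \<beta>))\<^sup>2"
  have "C \<ge> 0" by (simp add: C_def)
  have "\<exists>x\<in>dom_op A. dist x z < e" if "e > 0" for e
  proof -
    define l where "l = min 1 (e\<^sup>2 / (C + 1))"
    have "0 < l" "l \<le> 1" using \<open>e > 0\<close> \<open>C \<ge> 0\<close> by (simp_all add: l_def)
    obtain x where x: "(1 / l) *\<^sub>R (z - x) \<in> A x" using minty[OF max \<open>0 < l\<close>] by blast
    have "(norm (x - z))\<^sup>2 \<le> l * C"
    proof -
      have "l\<^sup>2 \<le> l" using \<open>0 < l\<close> \<open>l \<le> 1\<close> by (simp add: power2_eq_square mult_left_le)
      then have "l\<^sup>2 * (norm ((1 - t) *\<^sub>R \<alpha> + t *\<^sub>R \<beta>))\<^sup>2 \<le> l * (norm ((1 - t) *\<^sub>R \<alpha> + t *\<^sub>R \<beta>))\<^sup>2"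
        by (simp add: mult_right_mono)
      moreover have "2 * l * ((1 - t) * inner (a - z) \<alpha> + t * inner (b - z) \<beta>)
          \<le> l * (2 * \<bar>(1 - t) * inner (a - z) \<alpha> + t * inner (b - z) \<beta>\<bar>)"
        using \<open>0 < l\<close> by simp
      ultimately show ?thesis
        using norm_sq_resolvent_point_le[OF _ \<open>\<alpha> \<in> A a\<close> \<open>\<beta> \<in> A b\<close> \<open>0 \<le> t\<close> \<open>t \<le> 1\<close> \<open>0 < l\<close> z_def x]
          max unfolding maximally_monotone_def C_def by (simp add: distrib_left)
    qed
    also have "\<dots> < e\<^sup>2"
    proof -
      have "l * C \<le> e\<^sup>2 / (C + 1) * C" using \<open>C \<ge> 0\<close> by (intro mult_right_mono) (auto simp: l_def)
      also have "\<dots> < e\<^sup>2" using \<open>C \<ge> 0\<close> \<open>e > 0\<close> by (simp add: field_simps)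
      finally show ?thesis .
    qed
    finally have "norm (x - z) < e" by (rule power_less_imp_less_base) (use \<open>e > 0\<close> in simp)
    moreover have "x \<in> dom_op A" using x by (auto simp: dom_op_def)
    ultimately show ?thesis by (auto simp: dist_norm)
  qed
  then show ?thesis unfolding z_def[symmetric] closure_approachable by blast
qed

lemma convex_closure_if_segments:
  fixes S :: "'a::real_normed_vector set"
  assumes "\<And>a b t. a \<in> S \<Longrightarrow> b \<in> S \<Longrightarrow> 0 \<le> t \<Longrightarrow> t \<le> 1 \<Longrightarrow> (1 - t) *\<^sub>R a + t *\<^sub>R b \<in> closure S"
  shows "convex (closure S)"
  unfolding convex_alt
proof (intro ballI allI impI)
  fix a b and t :: real assume "a \<in> closure S" "b \<in> closure S" "0 \<le> t \<and> t \<le> 1"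
  define f where "f p = (1 - t) *\<^sub>R fst p + t *\<^sub>R snd p" for p :: "'a \<times> 'a"
  have "closed (f -` closure S)"
    unfolding f_def by (intro continuous_closed_vimage closed_closure continuous_intros)
  moreover have "S \<times> S \<subseteq> f -` closure S" using assms \<open>0 \<le> t \<and> t \<le> 1\<close> by (auto simp: f_def)
  ultimately have "closure S \<times> closure S \<subseteq> f -` closure S"
    by (metis closure_Times closure_minimal)
  then show "(1 - t) *\<^sub>R a + t *\<^sub>R b \<in> closure S"
    using \<open>a \<in> closure S\<close> \<open>b \<in> closure S\<close> by (auto simp: f_def)
qed

lemma convex_closure_dom_op:
  fixes A :: "'a::{real_inner,complete_space} \<Rightarrow> 'a set"
  shows "maximally_monotone A \<Longrightarrow> convex (closure (dom_op A))"
  by (intro convex_closure_if_segments convex_combination_in_closure_dom_op)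

lemma convex_closure_ran_op:
  fixes A :: "'a::{real_inner,complete_space} \<Rightarrow> 'a set"
  shows "maximally_monotone A \<Longrightarrow> convex (closure (ran_op A))"
  using convex_closure_dom_op[OF maximally_monotone_inverse_op] by simp

definition barrier_cone :: "'a::real_inner set \<Rightarrow> 'a set" where
  "barrier_cone S = {u. \<exists>M. \<forall>x\<in>S. inner u x \<le> M}"

lemma barrier_cone_dom_op_ran_op_inner_le_0:
  fixes A :: "'a::real_inner \<Rightarrow> 'a set"
  assumes max: "maximally_monotone A"
    and "a \<in> barrier_cone (dom_op A)" "b \<in> barrier_cone (ran_op A)"
  shows "inner a b \<le> 0"
proof (rule ccontr)
  txt \<open>If inner a b > 0, shifting a graph point by (t b, t a) keeps it monotonically related to
    the graph; for large t this contradicts the bound on inner a over dom A.\<close>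
  obtain \<alpha> \<beta> where \<alpha>: "\<And>x. x \<in> dom_op A \<Longrightarrow> inner a x \<le> \<alpha>"
    and \<beta>: "\<And>u. u \<in> ran_op A \<Longrightarrow> inner b u \<le> \<beta>"
    using assms(2,3) unfolding barrier_cone_def by blast
  assume "\<not> inner a b \<le> 0"
  obtain x0 u0 where "u0 \<in> A x0" using dom_op_nonempty[OF max] by (auto simp: dom_op_def)
  define t where "t = (\<bar>\<alpha> - inner a x0\<bar> + \<bar>\<beta> - inner b u0\<bar> + 1) / inner a b"
  have t: "t * inner a b = \<bar>\<alpha> - inner a x0\<bar> + \<bar>\<beta> - inner b u0\<bar> + 1" "t > 0"
    using \<open>\<not> inner a b \<le> 0\<close> by (simp_all add: t_def add_pos_nonneg)
  have "u0 + t *\<^sub>R a \<in> A (x0 + t *\<^sub>R b)"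
  proof (rule maximally_monotone_memI[OF max])
    fix y w assume "w \<in> A y"
    then have "inner a y \<le> \<alpha>" "inner b w \<le> \<beta>" using \<alpha> \<beta> by (auto simp: dom_op_def ran_op_def)
    then have "0 \<le> t * ((inner a x0 - inner a y) + (inner b u0 - inner b w) + t * inner a b)"
      using t by (intro mult_nonneg_nonneg) linarith+
    moreover have "0 \<le> inner (x0 - y) (u0 - w)"
      using maximally_monotoneD[OF max \<open>u0 \<in> A x0\<close> \<open>w \<in> A y\<close>] .
    moreover have "inner (x0 + t *\<^sub>R b - y) (u0 + t *\<^sub>R a - w) = inner (x0 - y) (u0 - w)
        + t * ((inner a x0 - inner a y) + (inner b u0 - inner b w) + t * inner a b)"
      by (simp add: inner_add_left inner_add_right inner_diff_left inner_diff_right inner_commute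
          algebra_simps)
    ultimately show "0 \<le> inner (x0 + t *\<^sub>R b - y) (u0 + t *\<^sub>R a - w)" by linarith
  qed
  then have "inner a (x0 + t *\<^sub>R b) \<le> \<alpha>" using \<alpha> by (auto simp: dom_op_def)
  then show False using t by (simp add: inner_add_right)
qed

lemma rec_cone_closureI:
  fixes S :: "'a::{real_inner,complete_space} set"
  assumes cvx: "convex (closure S)" and bar: "\<And>u. u \<in> barrier_cone S \<Longrightarrow> inner u k \<le> 0"
  shows "k \<in> rec_cone (closure S)"
  unfolding rec_cone_def
proof (intro CollectI ballI)
  fix c assume c: "c \<in> closure S"
  show "c + k \<in> closure S"
  proof (rule ccontr)
    assume out: "c + k \<notin> closure S"
    txt \<open>The normal vector u at the projection q of c + k is a barrier direction with
      inner u k > 0.\<close>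
    have ne: "closure S \<noteq> {}" using c by auto
    define q where "q = proj (closure S) (c + k)"
    define u where "u = c + k - q"
    have "q \<in> closure S"
      unfolding q_def by (rule proj_variational(1)[OF closed_closure cvx ne])
    then have "u \<noteq> 0" using out by (auto simp: u_def)
    have variational: "inner u (y - q) \<le> 0" if "y \<in> closure S" for y
      unfolding u_def q_def by (rule proj_variational(2)[OF closed_closure cvx ne that])
    have "u \<in> barrier_cone S"
      unfolding barrier_cone_def
    proof (intro CollectI exI ballI)
      fix x assume "x \<in> S"
      then show "inner u x \<le> inner u q"
        using variational[of x] closure_subset by (force simp: inner_diff_right)
    qed
    then have "inner u k \<le> 0" by (rule bar)
    moreover have "inner u (c - q) \<le> 0" using variational[OF c] .
    moreover have "inner u k = inner u u - inner u (c - q)"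
    proof -
      have "k = u - (c - q)" by (simp add: u_def)
      then show ?thesis by (metis inner_diff_right)
    qed
    moreover have "0 < inner u u" using \<open>u \<noteq> 0\<close> by simp
    ultimately show False by linarith
  qed
qed

lemma barrier_cone_rec_cone_inner_le_0:
  fixes S :: "'a::real_inner set"
  assumes "S \<noteq> {}" "u \<in> barrier_cone S" "k \<in> rec_cone (closure S)"
  shows "inner u k \<le> 0"
proof (rule ccontr)
  assume "\<not> inner u k \<le> 0"
  obtain M where "\<And>x. x \<in> S \<Longrightarrow> inner u x \<le> M" using assms(2) by (auto simp: barrier_cone_def)
  then have "closure S \<subseteq> {x. inner u x \<le> M}"
    by (intro closure_minimal) (auto simp: closed_halfspace_le)
  obtain c where "c \<in> S" using assms(1) by blast
  have "c + real n *\<^sub>R k \<in> closure S" for n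
  proof (induction n)
    case 0 then show ?case using \<open>c \<in> S\<close> closure_subset by auto
  next
    case (Suc n)
    then have "c + real n *\<^sub>R k + k \<in> closure S" using assms(3) unfolding rec_cone_def by blast
    then show ?case by (simp add: algebra_simps)
  qed
  with \<open>closure S \<subseteq> _\<close> have "inner u c + real n * inner u k \<le> M" for n
    by (force simp: inner_add_right)
  moreover obtain n :: nat where "(M - inner u c) / inner u k < real n" using reals_Archimedean2 by blast
  ultimately show False using \<open>\<not> inner u k \<le> 0\<close> by (smt (verit) divide_less_eq)
qed

lemma dual_rec_cone_if_uminus_barrier_cone:
  "S \<noteq> {} \<Longrightarrow> - u \<in> barrier_cone S \<Longrightarrow> u \<in> dual_cone (rec_cone (closure S))"
  using barrier_cone_rec_cone_inner_le_0[of S "- u"] by (auto simp: dual_cone_def)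

lemma barrier_cone_ran_op_subset_rec_cone:
  fixes A :: "'a::{real_inner,complete_space} \<Rightarrow> 'a set"
  assumes "maximally_monotone A"
  shows "barrier_cone (ran_op A) \<subseteq> rec_cone (closure (dom_op A))"
  using barrier_cone_dom_op_ran_op_inner_le_0[OF assms]
  by (auto intro!: rec_cone_closureI convex_closure_dom_op[OF assms])

lemma barrier_cone_dom_op_subset_rec_cone:
  fixes A :: "'a::{real_inner,complete_space} \<Rightarrow> 'a set"
  assumes "maximally_monotone A"
  shows "barrier_cone (dom_op A) \<subseteq> rec_cone (closure (ran_op A))"
  using barrier_cone_ran_op_subset_rec_cone[OF maximally_monotone_inverse_op[OF assms]] by simp

lemma bounded_linear_image_closure_Times_subset:
  "bounded_linear f \<Longrightarrow> f ` (closure S \<times> closure T) \<subseteq> closure (f ` (S \<times> T))"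
  using closure_bounded_linear_image_subset[of f "S \<times> T"] by (simp add: closure_Times)

lemma convex_closure_linear_image_Times:
  assumes f: "bounded_linear f" and "convex (closure S)" "convex (closure T)"
  shows "convex (closure (f ` (S \<times> T)))"
proof -
  have "closure (f ` (S \<times> T)) = closure (f ` (closure S \<times> closure T))"
  proof (rule subset_antisym)
    show "closure (f ` (S \<times> T)) \<subseteq> closure (f ` (closure S \<times> closure T))"
      by (intro closure_mono image_mono Sigma_mono closure_subset)
    show "closure (f ` (closure S \<times> closure T)) \<subseteq> closure (f ` (S \<times> T))"
      by (rule closure_minimal[OF bounded_linear_image_closure_Times_subset[OF f] closed_closure])
  qed
  moreover have "convex (f ` (closure S \<times> closure T))"
    by (rule convex_linear_image[OF bounded_linear.linear[OF f] convex_Times[OF assms(2,3)]])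
  ultimately show ?thesis by simp
qed

lemma rec_cone_closure_linear_image_Times:
  assumes f: "bounded_linear f" and k: "k \<in> rec_cone (closure T)"
  shows "f (0, k) \<in> rec_cone (closure (f ` (S \<times> T)))"
proof -
  have "f (0, k) + d \<in> closure (f ` (S \<times> T))" if "d \<in> f ` (S \<times> T)" for d
  proof -
    obtain a b where "a \<in> S" "b \<in> T" "d = f (a, b)" using \<open>d \<in> f ` (S \<times> T)\<close> by blast
    then have "f (0, k) + d = f (a, b + k)"
      using linear_add[OF bounded_linear.linear[OF f], of "(0, k)" "(a, b)"] by (simp add: add.commute)
    moreover have "a \<in> closure S" "b + k \<in> closure T"
      using \<open>a \<in> S\<close> \<open>b \<in> T\<close> k closure_subset unfolding rec_cone_def by auto
    ultimately show ?thesis using bounded_linear_image_closure_Times_subset[OF f] by blast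
  qed
  then have "closure ((+) (f (0, k)) ` f ` (S \<times> T)) \<subseteq> closure (f ` (S \<times> T))"
    by (intro closure_minimal closed_closure) blast
  then show ?thesis
    unfolding closure_translation rec_cone_def by (auto simp: add.commute)
qed

lemma min_norm_closure_diffs:
  fixes S T :: "'a::{real_inner,complete_space} set"
  assumes "convex (closure S)" "convex (closure T)" "S \<noteq> {}" "T \<noteq> {}"
    and D: "D = {a - b |a b. a \<in> S \<and> b \<in> T}" and p: "p = proj (closure D) 0"
  shows "p \<in> closure D" "\<And>y. y \<in> closure D \<Longrightarrow> inner p p \<le> inner p y"
    and "- p \<in> barrier_cone S" "p \<in> barrier_cone T"
    and "\<And>k. - k \<in> rec_cone (closure T) \<Longrightarrow> k \<in> rec_cone (closure D)"
proof -
  define f :: "'a \<times> 'a \<Rightarrow> 'a" where "f q = fst q - snd q" for q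
  have f: "bounded_linear f"
    unfolding f_def by (intro bounded_linear_sub bounded_linear_fst bounded_linear_snd)
  have D_image: "D = f ` (S \<times> T)" unfolding D f_def by force
  have convex: "convex (closure D)"
    unfolding D_image by (rule convex_closure_linear_image_Times[OF f assms(1,2)])
  have nonempty: "closure D \<noteq> {}" using assms(3,4) unfolding D_image by auto
  show "p \<in> closure D"
    unfolding p by (rule proj_variational(1)[OF closed_closure convex nonempty])
  show p_le: "inner p p \<le> inner p y" if "y \<in> closure D" for y
    unfolding p by (rule proj_zero_le[OF closed_closure convex nonempty that])
  have lower: "inner p p \<le> inner p (a - b)" if "a \<in> S" "b \<in> T" for a b
    using that by (intro p_le closure_subset[THEN subsetD]) (auto simp: D)
  obtain a0 b0 where "a0 \<in> S" "b0 \<in> T" using assms(3,4) by blast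
  show "- p \<in> barrier_cone S"
    unfolding barrier_cone_def using lower[OF _ \<open>b0 \<in> T\<close>]
    by (intro CollectI exI[of _ "- inner p p - inner p b0"] ballI) (force simp: inner_diff_right)
  show "p \<in> barrier_cone T"
    unfolding barrier_cone_def using lower[OF \<open>a0 \<in> S\<close>]
    by (intro CollectI exI[of _ "inner p a0 - inner p p"] ballI) (force simp: inner_diff_right)
  show "k \<in> rec_cone (closure D)" if "- k \<in> rec_cone (closure T)" for k
    using rec_cone_closure_linear_image_Times[OF f that, of S] by (simp add: D_image f_def)
qed

lemma min_norm_closure_sums:
  fixes S T :: "'a::{real_inner,complete_space} set"
  assumes "convex (closure S)" "convex (closure T)" "S \<noteq> {}" "T \<noteq> {}"
    and R: "R = {a + b |a b. a \<in> S \<and> b \<in> T}" and p: "p = proj (closure R) 0"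
  shows "p \<in> closure R" "\<And>y. y \<in> closure R \<Longrightarrow> inner p p \<le> inner p y"
    and "- p \<in> barrier_cone S" "- p \<in> barrier_cone T"
    and "\<And>k. k \<in> rec_cone (closure T) \<Longrightarrow> k \<in> rec_cone (closure R)"
proof -
  define f :: "'a \<times> 'a \<Rightarrow> 'a" where "f q = fst q + snd q" for q
  have f: "bounded_linear f"
    unfolding f_def by (intro bounded_linear_add bounded_linear_fst bounded_linear_snd)
  have R_image: "R = f ` (S \<times> T)" unfolding R f_def by force
  have convex: "convex (closure R)"
    unfolding R_image by (rule convex_closure_linear_image_Times[OF f assms(1,2)])
  have nonempty: "closure R \<noteq> {}" using assms(3,4) unfolding R_image by auto
  show "p \<in> closure R"
    unfolding p by (rule proj_variational(1)[OF closed_closure convex nonempty])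
  show p_le: "inner p p \<le> inner p y" if "y \<in> closure R" for y
    unfolding p by (rule proj_zero_le[OF closed_closure convex nonempty that])
  have lower: "inner p p \<le> inner p (a + b)" if "a \<in> S" "b \<in> T" for a b
    using that by (intro p_le closure_subset[THEN subsetD]) (auto simp: R)
  obtain a0 b0 where "a0 \<in> S" "b0 \<in> T" using assms(3,4) by blast
  show "- p \<in> barrier_cone S"
    unfolding barrier_cone_def using lower[OF _ \<open>b0 \<in> T\<close>]
    by (intro CollectI exI[of _ "inner p b0 - inner p p"] ballI) (force simp: inner_add_right)
  show "- p \<in> barrier_cone T"
    unfolding barrier_cone_def using lower[OF \<open>a0 \<in> S\<close>]
    by (intro CollectI exI[of _ "inner p a0 - inner p p"] ballI) (force simp: inner_add_right)
  show "k \<in> rec_cone (closure R)" if "k \<in> rec_cone (closure T)" for k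
    using rec_cone_closure_linear_image_Times[OF f that, of S] by (simp add: R_image f_def)
qed

theorem corollary3p5:
  fixes A B :: "'a::{real_inner, complete_space} \<Rightarrow> 'a set"
    and T :: "'a \<Rightarrow> 'a" and v vD vR :: 'a and D R :: "'a set"
  assumes "maximally_monotone A" and "maximally_monotone B"
    and T_def: "T = (\<lambda>x. x - resolvent A x + resolvent B (reflected_resolvent A x))"
    and v_def: "v = proj (closure (range (\<lambda>x. x - T x))) 0"
    and D_def: "D = {a - b | a b. a \<in> dom_op A \<and> b \<in> dom_op B}"
    and R_def: "R = {a + b | a b. a \<in> ran_op A \<and> b \<in> ran_op B}"
    and vD_def: "vD = proj (closure D) 0"
    and vR_def: "vR = proj (closure R) 0"
    and h1: "closure (range (\<lambda>x. x - T x)) = closure (D \<inter> R)"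
    and h2: "closure (D \<inter> R) = closure D \<inter> closure R"
  shows "vD = proj (dual_cone (rec_cone (closure (dom_op A)))) v
       \<and> vR = proj (uminus ` rec_cone (closure (dom_op A))) v
       \<and> vD = proj (uminus ` rec_cone (closure (ran_op A))) v
       \<and> vR = proj (dual_cone (rec_cone (closure (ran_op A)))) v"
proof -
  note nonempty = dom_op_nonempty[OF assms(1)] dom_op_nonempty[OF assms(2)]
    ran_op_nonempty[OF assms(1)] ran_op_nonempty[OF assms(2)]
  note D = min_norm_closure_diffs[OF convex_closure_dom_op[OF assms(1)]
      convex_closure_dom_op[OF assms(2)] nonempty(1,2) D_def vD_def]
  note R = min_norm_closure_sums[OF convex_closure_ran_op[OF assms(1)]
      convex_closure_ran_op[OF assms(2)] nonempty(3,4) R_def vR_def]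
  have rec_A: "- vR \<in> rec_cone (closure (dom_op A))" "- vD \<in> rec_cone (closure (ran_op A))"
    using barrier_cone_ran_op_subset_rec_cone[OF assms(1)] R(3)
      barrier_cone_dom_op_subset_rec_cone[OF assms(1)] D(3) by blast+
  have rec_B: "- vR \<in> rec_cone (closure (dom_op B))" "vD \<in> rec_cone (closure (ran_op B))"
    using barrier_cone_ran_op_subset_rec_cone[OF assms(2)] R(4)
      barrier_cone_dom_op_subset_rec_cone[OF assms(2)] D(4) by blast+
  note dual_A = dual_rec_cone_if_uminus_barrier_cone[OF nonempty(1) D(3)]
    dual_rec_cone_if_uminus_barrier_cone[OF nonempty(3) R(3)]
  have "- vD \<in> dual_cone (rec_cone (closure (dom_op B)))"
    using dual_rec_cone_if_uminus_barrier_cone[OF nonempty(2), of "- vD"] D(4) by simp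
  then have "0 \<le> inner (- vD) (- vR)" using rec_B(1) unfolding dual_cone_def by blast
  moreover have "0 \<le> inner vD (- vR)" using dual_A(1) rec_A(1) unfolding dual_cone_def by blast
  ultimately have orth: "inner vD vR = 0" by simp
  have v: "v = vD + vR"
    unfolding v_def h1 h2
    by (rule proj_inter_zero_eq_add[OF D(1) D(5)[OF rec_B(1)] R(1) R(5)[OF rec_B(2)] orth D(2) R(2)])
  have "inner vR vD = 0" using orth by (simp add: inner_commute)
  note moreau_dom = proj_moreau_decomposition[OF dual_A(1) rec_A(1) orth]
    and moreau_ran = proj_moreau_decomposition[OF dual_A(2) rec_A(2) this]
  show ?thesis unfolding v using moreau_dom moreau_ran by (simp add: add.commute)
qed

end
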